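(* $\mathfrak{P}_4=\mathfrak{S}_4$. That is, for a real vector $(c_\lambda)_{\lambda\vdash 4}$, the symmetric quartic $\sum_{\lambda\vdash 4}c_\lambda p^{(n)}_\lambda$ is nonnegative on $\mathbb{R}^n$ for every $n\ge 4$ if and only if it is a sum of squares of real forms for every $n\ge 4$.
   Context: For $n\ge 1$, $i\ge1$ let $p_i^{(n)}=\frac1n(x_1^i+\dots+x_n^i)$, and for a partition $\lambda=(\lambda_1,\dots,\lambda_l)$ of $4$ let $p^{(n)}_\lambda=\prod_i p^{(n)}_{\lambda_i}$. The partitions of $4$ are $(4),(3,1),(2,2),(2,1,1),(1,1,1,1)$. $\mathfrak{P}_4$ (resp. $\mathfrak{S}_4$) is the set of $(c_\lambda)\in\mathbb{R}^5$ such that $\sum_\lambda c_\lambda p^{(n)}_\lambda$ is nonnegative (resp. a sum of squares) for all $n\ge 4$. *)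

theory Defs
  imports Main Complex_Main
begin

text \<open>Points of R^n are represented as functions x :: nat => real, of which only
  the coordinates x 0, ..., x (n-1) are used.\<close>

definition psum :: "nat \<Rightarrow> nat \<Rightarrow> (nat \<Rightarrow> real) \<Rightarrow> real" where
  "psum n i x = (1 / real n) * (\<Sum>k<n. x k ^ i)"

text \<open>p_lambda^(n) = product of p_(lambda_i)^(n); partitions are lists of parts.\<close>
definition psum_part :: "nat \<Rightarrow> nat list \<Rightarrow> (nat \<Rightarrow> real) \<Rightarrow> real" where
  "psum_part n lam x = prod_list (map (\<lambda>i. psum n i x) lam)"

definition partitions4 :: "nat list list" where
  "partitions4 = [[4], [3,1], [2,2], [2,1,1], [1,1,1,1]]"

definition sym_quartic :: "(nat list \<Rightarrow> real) \<Rightarrow> nat \<Rightarrow> (nat \<Rightarrow> real) \<Rightarrow> real" where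
  "sym_quartic c n x = (\<Sum>lam\<leftarrow>partitions4. c lam * psum_part n lam x)"

text \<open>Coefficient vectors are functions on partitions4 (extended by 0 elsewhere),
  so that the sets below are genuinely subsets of R^5.\<close>
definition coeff_vecs :: "(nat list \<Rightarrow> real) set" where
  "coeff_vecs = {c. \<forall>lam. lam \<notin> set partitions4 \<longrightarrow> c lam = 0}"

definition is_sos_quartic :: "nat \<Rightarrow> ((nat \<Rightarrow> real) \<Rightarrow> real) \<Rightarrow> bool" where
  "is_sos_quartic n f \<longleftrightarrow>
     (\<exists>(m::nat) (A :: nat \<Rightarrow> nat \<Rightarrow> nat \<Rightarrow> real).
        \<forall>x. f x = (\<Sum>j<m. (\<Sum>i<n. \<Sum>k<n. A j i k * x i * x k) ^ 2))"

definition P4 :: "(nat list \<Rightarrow> real) set" where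
  "P4 = {c \<in> coeff_vecs. \<forall>n\<ge>4. \<forall>x. 0 \<le> sym_quartic c n x}"

definition S4 :: "(nat list \<Rightarrow> real) set" where
  "S4 = {c \<in> coeff_vecs. \<forall>n\<ge>4. is_sos_quartic n (sym_quartic c n)}"

end

theory Submission
  imports Defs
begin

text \<open>Write \<open>a\<close> for the mean of \<open>x\<close> and \<open>\<mu>\<^sub>j\<close> for its central moments. The quartics
  \<open>\<mu>\<^sub>4, \<mu>\<^sub>2\<^sup>2, a \<mu>\<^sub>3, a\<^sup>2 \<mu>\<^sub>2, a\<^sup>4\<close> are another basis of the symmetric quartics, in which
  \<open>\<Sum>\<^sub>\<lambda> c\<^sub>\<lambda> p\<^sub>\<lambda>\<close> has coordinates \<open>(\<alpha>, \<beta>, \<gamma>, \<delta>, \<epsilon>)\<close>.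

  Points taking two values, with rational weight \<open>p\<close> and hence for suitable \<open>n\<close>, and by
  continuity for every weight, realise the moments \<open>\<mu>\<^sub>2 = 1, \<mu>\<^sub>3 = s, \<mu>\<^sub>4 = s\<^sup>2 + 1\<close> with any
  mean \<open>a\<close> and any real \<open>s\<close>. So nonnegativity for all \<open>n \<ge> 4\<close> forces
  \<open>0 \<le> \<alpha> (s\<^sup>2 + 1) + \<beta> + \<gamma> a s + \<delta> a\<^sup>2 + \<epsilon> a\<^sup>4\<close> for all \<open>s, a\<close>.

  Conversely, this inequality gives \<open>\<alpha> \<ge> 0\<close>, \<open>\<gamma> = 2 \<alpha> t\<close> for some \<open>t\<close>, and nonnegativity of
  \<open>(\<alpha> + \<beta>) + (\<delta> - \<alpha> t\<^sup>2) y + \<epsilon> y\<^sup>2\<close> on \<open>y \<ge> 0\<close>. The quartic is then \<open>\<alpha>\<close> times the mean of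
  the \<open>((x\<^sub>k - a)\<^sup>2 - \<mu>\<^sub>2 + t a (x\<^sub>k - a))\<^sup>2\<close> plus a nonnegative combination of
  \<open>(\<mu>\<^sub>2 + r a\<^sup>2)\<^sup>2\<close>, \<open>a\<^sup>2 \<mu>\<^sub>2\<close> (the mean of the \<open>(a (x\<^sub>k - a))\<^sup>2\<close>) and \<open>(a\<^sup>2)\<^sup>2\<close>, all sums of squares
  of quadratic forms.\<close>

section \<open>Moments\<close>

lemma psum_zero_exp: "n > 0 \<Longrightarrow> psum n 0 y = 1"
  unfolding psum_def by simp

lemma psum_cmult: "psum n j (\<lambda>k. c * y k) = c ^ j * psum n j y"
  unfolding psum_def by (simp add: power_mult_distrib sum_distrib_left mult_ac)

lemma psum_shift:
  "psum n j (\<lambda>k. y k + b) = (\<Sum>i\<le>j. real (j choose i) * b ^ (j - i) * psum n i y)"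
  unfolding psum_def binomial_ring
  by (simp add: sum_distrib_left sum_distrib_right mult_ac flip: sum.swap[of _ "{..<n}"])

definition central_moment :: "nat \<Rightarrow> nat \<Rightarrow> (nat \<Rightarrow> real) \<Rightarrow> real" where
  "central_moment n j x = psum n j (\<lambda>k. x k - psum n 1 x)"

lemma central_moment_one: "n > 0 \<Longrightarrow> central_moment n 1 x = 0"
  unfolding central_moment_def psum_def by (simp add: sum_subtractf)

lemma psum_eq_central_moments:
  "psum n j x = (\<Sum>i\<le>j. real (j choose i) * psum n 1 x ^ (j - i) * central_moment n i x)"
  using psum_shift[of n j "\<lambda>k. x k - psum n 1 x" "psum n 1 x"]
  by (simp add: central_moment_def)

lemma psum_square_centered_quadratic:
  assumes "n > 0" "psum n 1 y = 0"
  shows "psum n 2 (\<lambda>k. y k ^ 2 - psum n 2 y + t * y k)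
    = psum n 4 y - psum n 2 y ^ 2 + 2 * t * psum n 3 y + t ^ 2 * psum n 2 y"
proof -
  define m where "m = psum n 2 y"
  have sums: "(\<Sum>k<n. y k ^ j) = real n * psum n j y" for j
    using assms(1) by (simp add: psum_def)
  have "\<And>k. (y k ^ 2 - m + t * y k) ^ 2
      = y k ^ 4 + 2 * t * y k ^ 3 + (t ^ 2 - 2 * m) * y k ^ 2 - 2 * t * m * y k ^ 1 + m ^ 2"
    by algebra
  then have "(\<Sum>k<n. (y k ^ 2 - m + t * y k) ^ 2) = (\<Sum>k<n. y k ^ 4) + 2 * t * (\<Sum>k<n. y k ^ 3)
      + (t ^ 2 - 2 * m) * (\<Sum>k<n. y k ^ 2) - 2 * t * m * (\<Sum>k<n. y k ^ 1) + real n * m ^ 2"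
    by (simp only: sum.distrib sum_subtractf flip: sum_distrib_left) simp
  also have "\<dots> = real n * (psum n 4 y - m ^ 2 + 2 * t * psum n 3 y + t ^ 2 * m)"
    unfolding sums m_def[symmetric] assms(2) by (simp add: algebra_simps power2_eq_square)
  finally show ?thesis
    using assms(1) unfolding m_def[symmetric] by (simp add: psum_def)
qed

definition moment_form ::
    "real \<Rightarrow> real \<Rightarrow> real \<Rightarrow> real \<Rightarrow> real \<Rightarrow> real \<Rightarrow> real \<Rightarrow> real \<Rightarrow> real \<Rightarrow> real" where
  "moment_form \<alpha> \<beta> \<gamma> \<delta> \<epsilon> a \<mu>\<^sub>2 \<mu>\<^sub>3 \<mu>\<^sub>4 =
     \<alpha> * \<mu>\<^sub>4 + \<beta> * \<mu>\<^sub>2 ^ 2 + \<gamma> * a * \<mu>\<^sub>3 + \<delta> * a ^ 2 * \<mu>\<^sub>2 + \<epsilon> * a ^ 4"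

definition moment_quartic ::
    "real \<Rightarrow> real \<Rightarrow> real \<Rightarrow> real \<Rightarrow> real \<Rightarrow> nat \<Rightarrow> (nat \<Rightarrow> real) \<Rightarrow> real" where
  "moment_quartic \<alpha> \<beta> \<gamma> \<delta> \<epsilon> n x = moment_form \<alpha> \<beta> \<gamma> \<delta> \<epsilon>
     (psum n 1 x) (central_moment n 2 x) (central_moment n 3 x) (central_moment n 4 x)"

lemma sym_quartic_eq_moment_quartic:
  assumes "n > 0"
  shows "sym_quartic c n x = moment_quartic (c [4]) (c [2,2]) (4 * c [4] + c [3,1])
    (6 * c [4] + 3 * c [3,1] + 2 * c [2,2] + c [2,1,1])
    (c [4] + c [3,1] + c [2,2] + c [2,1,1] + c [1,1,1,1]) n x"
proof -
  define a where "a = psum n 1 x"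
  have "central_moment n 0 x = 1" "central_moment n (Suc 0) x = 0"
    using assms central_moment_one by (simp_all add: central_moment_def psum_zero_exp)
  then have P: "psum n 2 x = a ^ 2 + central_moment n 2 x"
    "psum n 3 x = a ^ 3 + 3 * a * central_moment n 2 x + central_moment n 3 x"
    "psum n 4 x = a ^ 4 + 6 * a ^ 2 * central_moment n 2 x + 4 * a * central_moment n 3 x
       + central_moment n 4 x"
    using psum_eq_central_moments[of n 2 x] psum_eq_central_moments[of n 3 x]
      psum_eq_central_moments[of n 4 x]
    unfolding a_def[symmetric] by (simp_all add: eval_nat_numeral algebra_simps)
  show ?thesis
    unfolding sym_quartic_def partitions4_def psum_part_def moment_quartic_def moment_form_def
    by (simp only: list.map sum_list.Cons sum_list.Nil prod_list.Cons prod_list.Nil P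
        flip: a_def) algebra
qed

section \<open>Sums of squares\<close>

definition linear_form :: "nat \<Rightarrow> ((nat \<Rightarrow> real) \<Rightarrow> real) \<Rightarrow> bool" where
  "linear_form n l \<longleftrightarrow> (\<exists>v. \<forall>x. l x = (\<Sum>i<n. v i * x i))"

definition quadratic_form :: "nat \<Rightarrow> ((nat \<Rightarrow> real) \<Rightarrow> real) \<Rightarrow> bool" where
  "quadratic_form n q \<longleftrightarrow> (\<exists>M. \<forall>x. q x = (\<Sum>i<n. \<Sum>k<n. M i k * x i * x k))"

lemma linear_form_coordinate: "j < n \<Longrightarrow> linear_form n (\<lambda>x. x j)"
  unfolding linear_form_def
  by (rule exI[of _ "\<lambda>i. if i = j then 1 else 0"]) (simp add: if_distrib[of "\<lambda>c. c * _"] cong: if_cong)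

lemma linear_form_mean: "linear_form n (psum n 1)"
  unfolding linear_form_def psum_def
  by (rule exI[of _ "\<lambda>i. 1 / real n"]) (simp add: sum_distrib_left)

lemma linear_form_diff:
  assumes "linear_form n f" "linear_form n g" shows "linear_form n (\<lambda>x. f x - g x)"
proof -
  obtain v w where "\<forall>x. f x = (\<Sum>i<n. v i * x i)" "\<forall>x. g x = (\<Sum>i<n. w i * x i)"
    using assms unfolding linear_form_def by blast
  then show ?thesis unfolding linear_form_def
    by (intro exI[of _ "\<lambda>i. v i - w i"]) (simp add: left_diff_distrib sum_subtractf)
qed

lemma linear_form_cmult:
  assumes "linear_form n f" shows "linear_form n (\<lambda>x. c * f x)"
proof -
  obtain v where "\<forall>x. f x = (\<Sum>i<n. v i * x i)"
    using assms unfolding linear_form_def by blast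
  then show ?thesis unfolding linear_form_def
    by (intro exI[of _ "\<lambda>i. c * v i"]) (simp add: sum_distrib_left mult_ac)
qed

lemma linear_form_centered_coordinate: "k < n \<Longrightarrow> linear_form n (\<lambda>x. x k - psum n 1 x)"
  by (intro linear_form_diff linear_form_coordinate linear_form_mean)

lemma quadratic_form_mult:
  assumes "linear_form n f" "linear_form n g" shows "quadratic_form n (\<lambda>x. f x * g x)"
proof -
  obtain v w where "\<forall>x. f x = (\<Sum>i<n. v i * x i)" "\<forall>x. g x = (\<Sum>i<n. w i * x i)"
    using assms unfolding linear_form_def by blast
  then show ?thesis unfolding quadratic_form_def
    by (intro exI[of _ "\<lambda>i k. v i * w k"]) (simp add: sum_product mult_ac)
qed

lemma quadratic_form_square: "linear_form n f \<Longrightarrow> quadratic_form n (\<lambda>x. f x ^ 2)"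
  unfolding power2_eq_square by (rule quadratic_form_mult)

lemma quadratic_form_add:
  assumes "quadratic_form n f" "quadratic_form n g" shows "quadratic_form n (\<lambda>x. f x + g x)"
proof -
  obtain M N where "\<forall>x. f x = (\<Sum>i<n. \<Sum>k<n. M i k * x i * x k)"
    "\<forall>x. g x = (\<Sum>i<n. \<Sum>k<n. N i k * x i * x k)"
    using assms unfolding quadratic_form_def by blast
  then show ?thesis unfolding quadratic_form_def
    by (intro exI[of _ "\<lambda>i k. M i k + N i k"]) (simp add: distrib_right sum.distrib)
qed

lemma quadratic_form_cmult:
  assumes "quadratic_form n f" shows "quadratic_form n (\<lambda>x. c * f x)"
proof -
  obtain M where "\<forall>x. f x = (\<Sum>i<n. \<Sum>k<n. M i k * x i * x k)"
    using assms unfolding quadratic_form_def by blast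
  then show ?thesis unfolding quadratic_form_def
    by (intro exI[of _ "\<lambda>i k. c * M i k"]) (simp add: sum_distrib_left mult_ac)
qed

lemma quadratic_form_diff:
  "quadratic_form n f \<Longrightarrow> quadratic_form n g \<Longrightarrow> quadratic_form n (\<lambda>x. f x - g x)"
  using quadratic_form_add[of n f "\<lambda>x. (-1) * g x"] quadratic_form_cmult[of n g "-1"] by simp

lemma quadratic_form_sum:
  "(\<And>k. k < (m::nat) \<Longrightarrow> quadratic_form n (f k)) \<Longrightarrow> quadratic_form n (\<lambda>x. \<Sum>k<m. f k x)"
proof (induction m)
  case 0
  then show ?case
    unfolding quadratic_form_def by (intro exI[of _ "\<lambda>i k. 0"]) simp
next
  case (Suc m)
  then show ?case by (simp add: quadratic_form_add)
qed

lemma quadratic_form_mean_squares: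
  "(\<And>k. k < n \<Longrightarrow> linear_form n (l k)) \<Longrightarrow> quadratic_form n (\<lambda>x. psum n 2 (\<lambda>k. l k x))"
  unfolding psum_def by (intro quadratic_form_cmult quadratic_form_sum quadratic_form_square) auto

lemma quadratic_form_variance: "quadratic_form n (central_moment n 2)"
  unfolding central_moment_def
  by (intro quadratic_form_mean_squares linear_form_centered_coordinate)

lemma is_sos_quartic_nonneg: "is_sos_quartic n f \<Longrightarrow> 0 \<le> f x"
  unfolding is_sos_quartic_def by (auto intro!: sum_nonneg)

lemma is_sos_quartic_square: "quadratic_form n q \<Longrightarrow> is_sos_quartic n (\<lambda>x. q x ^ 2)"
  unfolding is_sos_quartic_def quadratic_form_def
  by (auto intro!: exI[of _ 1])

lemma is_sos_quartic_add:
  assumes "is_sos_quartic n f" "is_sos_quartic n g"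
  shows "is_sos_quartic n (\<lambda>x. f x + g x)"
proof -
  obtain m1 m2 :: nat and A1 A2 :: "nat \<Rightarrow> nat \<Rightarrow> nat \<Rightarrow> real" where
    f: "\<forall>x. f x = (\<Sum>j<m1. (\<Sum>i<n. \<Sum>k<n. A1 j i k * x i * x k) ^ 2)" and
    g: "\<forall>x. g x = (\<Sum>j<m2. (\<Sum>i<n. \<Sum>k<n. A2 j i k * x i * x k) ^ 2)"
    using assms unfolding is_sos_quartic_def by blast
  define A where "A j = (if j < m1 then A1 j else A2 (j - m1))" for j
  have split: "(\<Sum>j<m1 + m. F j) = (\<Sum>j<m1. F j) + (\<Sum>j<m. F (m1 + j))"
    for m and F :: "nat \<Rightarrow> real"
    by (induction m) auto
  have "f x + g x = (\<Sum>j<m1 + m2. (\<Sum>i<n. \<Sum>k<n. A j i k * x i * x k) ^ 2)" for x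
    unfolding split using f g by (simp add: A_def)
  then show ?thesis unfolding is_sos_quartic_def by blast
qed

lemma is_sos_quartic_cmult:
  assumes "is_sos_quartic n f" "0 \<le> c"
  shows "is_sos_quartic n (\<lambda>x. c * f x)"
proof -
  obtain m :: nat and A :: "nat \<Rightarrow> nat \<Rightarrow> nat \<Rightarrow> real"
    where f: "\<forall>x. f x = (\<Sum>j<m. (\<Sum>i<n. \<Sum>k<n. A j i k * x i * x k) ^ 2)"
    using assms(1) unfolding is_sos_quartic_def by blast
  have "c * f x = (\<Sum>j<m. (\<Sum>i<n. \<Sum>k<n. (sqrt c * A j i k) * x i * x k) ^ 2)" for x
    using f assms(2)
    by (simp add: sum_distrib_left power_mult_distrib mult_ac flip: sum_distrib_left)
  then show ?thesis unfolding is_sos_quartic_def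
    by (intro exI[of _ m] exI[of _ "\<lambda>j i k. sqrt c * A j i k"]) blast
qed

lemma is_sos_quartic_sum:
  "(\<And>k. k < (m::nat) \<Longrightarrow> is_sos_quartic n (f k)) \<Longrightarrow> is_sos_quartic n (\<lambda>x. \<Sum>k<m. f k x)"
proof (induction m)
  case 0
  then show ?case unfolding is_sos_quartic_def by (intro exI[of _ 0]) simp
next
  case (Suc m)
  then show ?case by (simp add: is_sos_quartic_add)
qed

lemma is_sos_quartic_mean_squares:
  "(\<And>k. k < n \<Longrightarrow> quadratic_form n (q k)) \<Longrightarrow> is_sos_quartic n (\<lambda>x. psum n 2 (\<lambda>k. q k x))"
  unfolding psum_def
  by (intro is_sos_quartic_cmult is_sos_quartic_sum is_sos_quartic_square) auto

section \<open>Nonnegative quadratic polynomials\<close>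

lemma nonneg_on_halfline_imp_leading_coeff_nonneg:
  fixes a b c :: real
  assumes "\<forall>y\<ge>0. 0 \<le> a * y ^ 2 + b * y + c"
  shows "0 \<le> a"
proof (rule ccontr)
  assume "\<not> 0 \<le> a"
  define y where "y = max 1 ((\<bar>b\<bar> + \<bar>c\<bar> + 1) / (- a))"
  have "(\<bar>b\<bar> + \<bar>c\<bar> + 1) / (- a) \<le> y" "1 \<le> y" unfolding y_def by simp_all
  moreover have "0 < - a" using \<open>\<not> 0 \<le> a\<close> by simp
  ultimately have "\<bar>b\<bar> + \<bar>c\<bar> + 1 \<le> y * (- a)"
    by (simp only: pos_divide_le_eq)
  then have neg: "a * y + b \<le> - (\<bar>c\<bar> + 1)" by (simp add: algebra_simps)
  have "0 \<le> (y - 1) * - (a * y + b)"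
    using neg \<open>1 \<le> y\<close> by (intro mult_nonneg_nonneg) auto
  then have "a * y ^ 2 + b * y + c < 0"
    using neg by (simp add: power2_eq_square algebra_simps)
  moreover have "0 \<le> a * y ^ 2 + b * y + c" using assms \<open>1 \<le> y\<close> by simp
  ultimately show False by linarith
qed

lemma nonneg_quadratic_imp_vertex:
  fixes a b c :: real
  assumes nonneg: "\<forall>s. 0 \<le> a * s ^ 2 + b * s + c"
  obtains t where "0 \<le> a" "b = 2 * a * t"
proof -
  have "0 \<le> a"
    using nonneg by (intro nonneg_on_halfline_imp_leading_coeff_nonneg[of a b c]) simp
  moreover have "b = 0" if "a = 0"
  proof (rule ccontr)
    assume "b \<noteq> 0"
    then have "b * (- (\<bar>c\<bar> + 1) / b) + c < 0" by simp
    with nonneg[rule_format, of "- (\<bar>c\<bar> + 1) / b"] that show False by simp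
  qed
  ultimately show thesis
    using that[of "b / (2 * a)"] that[of 0] by fastforce
qed

lemma nonneg_on_halfline_imp_discriminant:
  fixes A B C :: real
  assumes nonneg: "\<forall>y\<ge>0. 0 \<le> A + B * y + C * y ^ 2" and "B < 0"
  shows "B ^ 2 \<le> 4 * A * C"
proof -
  have "0 \<le> A" using nonneg[rule_format, of 0] by simp
  have "C \<noteq> 0"
  proof
    assume "C = 0"
    then have "A + B * ((A + 1) / - B) + C * ((A + 1) / - B) ^ 2 < 0" using \<open>B < 0\<close> by simp
    moreover have "0 \<le> (A + 1) / - B" using \<open>0 \<le> A\<close> \<open>B < 0\<close> by (intro divide_nonneg_pos) auto
    ultimately show False using nonneg[rule_format, of "(A + 1) / - B"] by linarith
  qed
  moreover have "0 \<le> C"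
    using nonneg by (intro nonneg_on_halfline_imp_leading_coeff_nonneg) (simp add: algebra_simps)
  ultimately have "0 < C" by simp
  then have "0 \<le> - B / (2 * C)" using \<open>B < 0\<close> by (intro divide_nonneg_pos) auto
  then have "0 \<le> A + B * (- B / (2 * C)) + C * (- B / (2 * C)) ^ 2"
    using nonneg by blast
  then show ?thesis
    using \<open>0 < C\<close> by (simp add: field_simps power2_eq_square)
qed

lemma nonneg_on_halfline_imp_binary_form_decomp:
  fixes A B C :: real
  assumes nonneg: "\<forall>y\<ge>0. 0 \<le> A + B * y + C * y ^ 2"
  obtains l m v r where "0 \<le> l" "0 \<le> m" "0 \<le> v"
    "\<And>X Y. A * X ^ 2 + B * X * Y + C * Y ^ 2 = l * (X + r * Y) ^ 2 + m * X * Y + v * Y ^ 2"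
proof -
  have "0 \<le> A" using nonneg[rule_format, of 0] by simp
  have "0 \<le> C"
    using nonneg by (intro nonneg_on_halfline_imp_leading_coeff_nonneg) (simp add: algebra_simps)
  show thesis
  proof (cases "0 \<le> B")
    case True
    then show thesis
      using that[where l = A and r = 0 and m = B and v = C] \<open>0 \<le> A\<close> \<open>0 \<le> C\<close> by simp
  next
    case False
    then have "B ^ 2 \<le> 4 * A * C" "0 < B ^ 2"
      using nonneg_on_halfline_imp_discriminant[OF nonneg] by simp_all
    then have "0 < 4 * A * C" by linarith
    then have "0 < A" using \<open>0 \<le> C\<close> by (simp add: zero_less_mult_iff)
    have "0 \<le> C - B ^ 2 / (4 * A)"
      using \<open>B ^ 2 \<le> 4 * A * C\<close> \<open>0 < A\<close> by (simp add: field_simps)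
    moreover have "A * X ^ 2 + B * X * Y + C * Y ^ 2
        = A * (X + B / (2 * A) * Y) ^ 2 + 0 * X * Y + (C - B ^ 2 / (4 * A)) * Y ^ 2" for X Y
      using \<open>0 < A\<close> by (simp add: field_simps power2_eq_square)
    ultimately show thesis
      using that[where l = A and r = "B / (2 * A)" and m = 0 and v = "C - B ^ 2 / (4 * A)"] \<open>0 < A\<close>
      by simp
  qed
qed


section \<open>Sufficiency: an explicit sum of squares\<close>

lemma moment_form_decomp:
  assumes nonneg: "\<And>s a. 0 \<le> moment_form \<alpha> \<beta> \<gamma> \<delta> \<epsilon> a 1 s (s ^ 2 + 1)"
  obtains l m v t r where "0 \<le> \<alpha>" "0 \<le> l" "0 \<le> m" "0 \<le> v"
    "\<And>a \<mu>\<^sub>2 \<mu>\<^sub>3 \<mu>\<^sub>4. moment_form \<alpha> \<beta> \<gamma> \<delta> \<epsilon> a \<mu>\<^sub>2 \<mu>\<^sub>3 \<mu>\<^sub>4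
       = \<alpha> * (\<mu>\<^sub>4 - \<mu>\<^sub>2 ^ 2 + 2 * (t * a) * \<mu>\<^sub>3 + (t * a) ^ 2 * \<mu>\<^sub>2)
         + l * (\<mu>\<^sub>2 + r * a ^ 2) ^ 2 + m * (a ^ 2 * \<mu>\<^sub>2) + v * (a ^ 2) ^ 2"
proof -
  have "\<forall>s. 0 \<le> \<alpha> * s ^ 2 + \<gamma> * s + (\<alpha> + \<beta> + \<delta> + \<epsilon>)"
    using nonneg[where a = 1] by (simp add: moment_form_def algebra_simps)
  then obtain t where "0 \<le> \<alpha>" and \<gamma>: "\<gamma> = 2 * \<alpha> * t"
    by (rule nonneg_quadratic_imp_vertex)
  have "\<forall>y\<ge>0. 0 \<le> (\<alpha> + \<beta>) + (\<delta> - \<alpha> * t ^ 2) * y + \<epsilon> * y ^ 2"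
  proof (intro allI impI)
    fix y :: real
    assume "0 \<le> y"
    then obtain a where y: "y = a ^ 2" by (metis real_sqrt_pow2)
    have "moment_form \<alpha> \<beta> \<gamma> \<delta> \<epsilon> a 1 (- t * a) ((- t * a) ^ 2 + 1)
        = (\<alpha> + \<beta>) + (\<delta> - \<alpha> * t ^ 2) * y + \<epsilon> * y ^ 2"
      unfolding moment_form_def y \<gamma> by (simp add: algebra_simps power2_eq_square power4_eq_xxxx)
    with nonneg show "0 \<le> (\<alpha> + \<beta>) + (\<delta> - \<alpha> * t ^ 2) * y + \<epsilon> * y ^ 2" by metis
  qed
  then obtain l m v r where "0 \<le> l" "0 \<le> m" "0 \<le> v" and decomp:
    "\<And>X Y. (\<alpha> + \<beta>) * X ^ 2 + (\<delta> - \<alpha> * t ^ 2) * X * Y + \<epsilon> * Y ^ 2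
       = l * (X + r * Y) ^ 2 + m * X * Y + v * Y ^ 2"
    by (rule nonneg_on_halfline_imp_binary_form_decomp) (rule that)
  have "moment_form \<alpha> \<beta> \<gamma> \<delta> \<epsilon> a \<mu>\<^sub>2 \<mu>\<^sub>3 \<mu>\<^sub>4
      = \<alpha> * (\<mu>\<^sub>4 - \<mu>\<^sub>2 ^ 2 + 2 * (t * a) * \<mu>\<^sub>3 + (t * a) ^ 2 * \<mu>\<^sub>2)
        + l * (\<mu>\<^sub>2 + r * a ^ 2) ^ 2 + m * (a ^ 2 * \<mu>\<^sub>2) + v * (a ^ 2) ^ 2" for a \<mu>\<^sub>2 \<mu>\<^sub>3 \<mu>\<^sub>4
    using decomp[of \<mu>\<^sub>2 "a ^ 2"] unfolding moment_form_def \<gamma> by algebra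
  with \<open>0 \<le> \<alpha>\<close> \<open>0 \<le> l\<close> \<open>0 \<le> m\<close> \<open>0 \<le> v\<close> show thesis by (rule that)
qed

lemma is_sos_moment_quartic:
  assumes "n > 0"
    and nonneg: "\<And>s a. 0 \<le> moment_form \<alpha> \<beta> \<gamma> \<delta> \<epsilon> a 1 s (s ^ 2 + 1)"
  shows "is_sos_quartic n (moment_quartic \<alpha> \<beta> \<gamma> \<delta> \<epsilon> n)"
proof -
  obtain l m v t r where "0 \<le> \<alpha>" "0 \<le> l" "0 \<le> m" "0 \<le> v" and decomp:
    "\<And>a \<mu>\<^sub>2 \<mu>\<^sub>3 \<mu>\<^sub>4. moment_form \<alpha> \<beta> \<gamma> \<delta> \<epsilon> a \<mu>\<^sub>2 \<mu>\<^sub>3 \<mu>\<^sub>4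
       = \<alpha> * (\<mu>\<^sub>4 - \<mu>\<^sub>2 ^ 2 + 2 * (t * a) * \<mu>\<^sub>3 + (t * a) ^ 2 * \<mu>\<^sub>2)
         + l * (\<mu>\<^sub>2 + r * a ^ 2) ^ 2 + m * (a ^ 2 * \<mu>\<^sub>2) + v * (a ^ 2) ^ 2"
    using nonneg by (rule moment_form_decomp) (rule that)
  define a where "a x = psum n 1 x" for x
  define \<mu> where "\<mu> j x = central_moment n j x" for j x
  define q where "q x =
      \<alpha> * psum n 2 (\<lambda>k. (x k - a x) ^ 2 - \<mu> 2 x + t * a x * (x k - a x))
      + l * (\<mu> 2 x + r * a x ^ 2) ^ 2 + m * psum n 2 (\<lambda>k. a x * (x k - a x))
      + v * (a x ^ 2) ^ 2" for x
  have "is_sos_quartic n q"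
    unfolding q_def a_def \<mu>_def
    by (intro is_sos_quartic_add is_sos_quartic_cmult is_sos_quartic_mean_squares
        is_sos_quartic_square quadratic_form_add quadratic_form_diff quadratic_form_cmult
        quadratic_form_mult quadratic_form_square quadratic_form_variance linear_form_cmult
        linear_form_centered_coordinate linear_form_mean
        \<open>0 \<le> \<alpha>\<close> \<open>0 \<le> l\<close> \<open>0 \<le> m\<close> \<open>0 \<le> v\<close>)
  moreover have "moment_quartic \<alpha> \<beta> \<gamma> \<delta> \<epsilon> n x = q x" for x
  proof -
    have "psum n 1 (\<lambda>k. x k - a x) = 0"
      using central_moment_one[OF \<open>n > 0\<close>] by (simp add: central_moment_def a_def)
    then have "psum n 2 (\<lambda>k. (x k - a x) ^ 2 - \<mu> 2 x + t * a x * (x k - a x))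
        = \<mu> 4 x - \<mu> 2 x ^ 2 + 2 * (t * a x) * \<mu> 3 x + (t * a x) ^ 2 * \<mu> 2 x"
      using psum_square_centered_quadratic[OF \<open>n > 0\<close>, of "\<lambda>k. x k - a x" "t * a x"]
      by (simp add: \<mu>_def central_moment_def a_def)
    moreover have "psum n 2 (\<lambda>k. a x * (x k - a x)) = a x ^ 2 * \<mu> 2 x"
      by (simp add: psum_cmult \<mu>_def central_moment_def a_def)
    ultimately show ?thesis
      unfolding q_def moment_quartic_def decomp \<mu>_def[symmetric] a_def[symmetric] by simp
  qed
  then have "moment_quartic \<alpha> \<beta> \<gamma> \<delta> \<epsilon> n = q" ..
  ultimately show ?thesis by simp
qed

section \<open>Necessity: two-valued points\<close>

lemma psum_two_valued:
  assumes "0 < n" "k \<le> n"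
  shows "psum n j (\<lambda>i. if i < k then u else v)
    = real k / real n * u ^ j + (1 - real k / real n) * v ^ j"
proof -
  have "(\<Sum>i<n. (if i < k then u else v) ^ j)
      = (\<Sum>i<k. (if i < k then u else v) ^ j) + (\<Sum>i=k..<n. (if i < k then u else v) ^ j)"
    using assms(2) by (metis lessThan_atLeast0 le0 sum.atLeastLessThan_concat)
  also have "\<dots> = (\<Sum>i<k. u ^ j) + (\<Sum>i=k..<n. v ^ j)"
    by (intro arg_cong2[where f = "(+)"] sum.cong) auto
  finally show ?thesis
    using assms by (simp add: psum_def field_simps of_nat_diff)
qed

definition two_point_moment :: "real \<Rightarrow> real \<Rightarrow> nat \<Rightarrow> real" where
  "two_point_moment p D j = p * ((1 - p) * D) ^ j + (1 - p) * (- p * D) ^ j"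

lemma moment_quartic_two_valued:
  assumes "0 < n" "k \<le> n" and p: "p = real k / real n"
  shows "moment_quartic \<alpha> \<beta> \<gamma> \<delta> \<epsilon> n (\<lambda>i. if i < k then a + (1 - p) * D else a - p * D)
    = moment_form \<alpha> \<beta> \<gamma> \<delta> \<epsilon> a
        (two_point_moment p D 2) (two_point_moment p D 3) (two_point_moment p D 4)"
proof -
  define x where "x i = (if i < k then a + (1 - p) * D else a - p * D)" for i
  have "psum n 1 x = p * (a + (1 - p) * D) + (1 - p) * (a - p * D)"
    unfolding x_def p by (simp only: psum_two_valued[OF assms(1,2)] power_one_right)
  also have "\<dots> = a" by (simp add: algebra_simps)
  finally have "psum n 1 x = a" .
  then have "central_moment n j x = two_point_moment p D j" for j
    unfolding central_moment_def two_point_moment_def x_def p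
    by (simp only: if_distrib[of "\<lambda>z. z - a"] psum_two_valued[OF assms(1,2)]) simp
  with \<open>psum n 1 x = a\<close> show ?thesis
    unfolding moment_quartic_def x_def[symmetric] by simp
qed

lemma nonneg_if_nonneg_on_Rats:
  fixes f :: "real \<Rightarrow> real"
  assumes "isCont f p" "a < p" "p < b"
    and rat: "\<And>q. q \<in> \<rat> \<Longrightarrow> a < q \<Longrightarrow> q < b \<Longrightarrow> 0 \<le> f q"
  shows "0 \<le> f p"
proof (rule ccontr)
  assume "\<not> 0 \<le> f p"
  then have "eventually (\<lambda>q. f q < 0) (at p)"
    using assms(1) by (intro order_tendstoD) (auto simp: isCont_def)
  then obtain d where "d > 0" and d: "\<And>q. q \<noteq> p \<Longrightarrow> dist q p < d \<Longrightarrow> f q < 0"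
    unfolding eventually_at by blast
  obtain q where "q \<in> \<rat>" "p < q" "q < min (p + d) b"
    using Rats_dense_in_real[of p "min (p + d) b"] \<open>d > 0\<close> \<open>p < b\<close> by auto
  then show False
    using d[of q] rat[of q] \<open>a < p\<close> by (auto simp: dist_real_def)
qed

lemma nonneg_moment_quartic_imp_two_point_nonneg:
  assumes nonneg: "\<forall>n\<ge>4. \<forall>x. 0 \<le> moment_quartic \<alpha> \<beta> \<gamma> \<delta> \<epsilon> n x"
    and "0 < p" "p < 1"
  shows "0 \<le> moment_form \<alpha> \<beta> \<gamma> \<delta> \<epsilon> a
    (two_point_moment p D 2) (two_point_moment p D 3) (two_point_moment p D 4)"
proof (rule nonneg_if_nonneg_on_Rats[where p = p and a = 0 and b = 1])
  show "isCont (\<lambda>p. moment_form \<alpha> \<beta> \<gamma> \<delta> \<epsilon> a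
      (two_point_moment p D 2) (two_point_moment p D 3) (two_point_moment p D 4)) p"
    unfolding moment_form_def two_point_moment_def by (intro continuous_intros)
  fix q :: real
  assume "q \<in> \<rat>" "0 < q" "q < 1"
  then obtain k n where "n \<noteq> 0" "q = real k / real n"
    using Rats_abs_nat_div_natE[of q] by (metis abs_of_pos)
  with \<open>0 < q\<close> \<open>q < 1\<close> have "k < n" "q = real (4 * k) / real (4 * n)"
    by (simp_all add: divide_less_eq)
  then have "moment_form \<alpha> \<beta> \<gamma> \<delta> \<epsilon> a
      (two_point_moment q D 2) (two_point_moment q D 3) (two_point_moment q D 4)
      = moment_quartic \<alpha> \<beta> \<gamma> \<delta> \<epsilon> (4 * n)
          (\<lambda>i. if i < 4 * k then a + (1 - q) * D else a - q * D)"
    using \<open>n \<noteq> 0\<close> by (intro moment_quartic_two_valued[symmetric]) auto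
  also have "0 \<le> \<dots>" using nonneg \<open>n \<noteq> 0\<close> by simp
  finally show "0 \<le> moment_form \<alpha> \<beta> \<gamma> \<delta> \<epsilon> a
      (two_point_moment q D 2) (two_point_moment q D 3) (two_point_moment q D 4)" .
qed (use assms in auto)

lemma two_point_moments_standardized:
  fixes s :: real
  obtains p D where "0 < p" "p < 1" "two_point_moment p D 2 = 1" "two_point_moment p D 3 = s"
    "two_point_moment p D 4 = s ^ 2 + 1"
proof -
  define D where "D = sqrt (s ^ 2 + 4)"
  define p where "p = (1 - s / D) / 2"
  have "0 < s ^ 2 + 4" by (simp add: add_nonneg_pos)
  then have "D > 0" "D ^ 2 = s ^ 2 + 4" unfolding D_def by simp_all
  have "\<bar>s\<bar> < D" unfolding D_def by (rule real_less_rsqrt) simp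
  then have "0 < p" "p < 1" using \<open>D > 0\<close> unfolding p_def by (auto simp: field_simps abs_less_iff)
  have "p * (1 - p) * D ^ 2 = 1" and "(1 - 2 * p) * D = s"
    using \<open>D > 0\<close> \<open>D ^ 2 = s ^ 2 + 4\<close> \<open>0 < s ^ 2 + 4\<close> unfolding p_def
    by (simp_all add: field_simps power2_eq_square)
  with \<open>D ^ 2 = s ^ 2 + 4\<close> have "two_point_moment p D 2 = 1" "two_point_moment p D 3 = s"
    "two_point_moment p D 4 = s ^ 2 + 1"
    unfolding two_point_moment_def by algebra+
  with \<open>0 < p\<close> \<open>p < 1\<close> show thesis by (rule that)
qed

lemma nonneg_moment_quartic_imp_standardized_nonneg:
  assumes "\<forall>n\<ge>4. \<forall>x. 0 \<le> moment_quartic \<alpha> \<beta> \<gamma> \<delta> \<epsilon> n x"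
  shows "0 \<le> moment_form \<alpha> \<beta> \<gamma> \<delta> \<epsilon> a 1 s (s ^ 2 + 1)"
proof -
  obtain p D where "0 < p" "p < 1" and moments: "two_point_moment p D 2 = 1"
    "two_point_moment p D 3 = s" "two_point_moment p D 4 = s ^ 2 + 1"
    by (rule two_point_moments_standardized)
  from nonneg_moment_quartic_imp_two_point_nonneg[OF assms \<open>0 < p\<close> \<open>p < 1\<close>, of a D]
  show ?thesis unfolding moments .
qed

theorem theorem1p3:
  shows "P4 = S4"
proof -
  have "(\<forall>n\<ge>4. \<forall>x. 0 \<le> sym_quartic c n x) \<longleftrightarrow> (\<forall>n\<ge>4. is_sos_quartic n (sym_quartic c n))"
    for c :: "nat list \<Rightarrow> real"
  proof
    let ?q = "moment_quartic (c [4]) (c [2,2]) (4 * c [4] + c [3,1])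
      (6 * c [4] + 3 * c [3,1] + 2 * c [2,2] + c [2,1,1])
      (c [4] + c [3,1] + c [2,2] + c [2,1,1] + c [1,1,1,1])"
    have sym: "sym_quartic c n = ?q n" if "n \<ge> 4" for n
      using that by (intro ext sym_quartic_eq_moment_quartic) simp
    assume "\<forall>n\<ge>4. \<forall>x. 0 \<le> sym_quartic c n x"
    then have "\<forall>n\<ge>4. \<forall>x. 0 \<le> ?q n x" by (simp add: sym)
    then show "\<forall>n\<ge>4. is_sos_quartic n (sym_quartic c n)"
      by (simp add: sym is_sos_moment_quartic nonneg_moment_quartic_imp_standardized_nonneg)
  qed (use is_sos_quartic_nonneg in blast)
  then show ?thesis unfolding P4_def S4_def by blast
qed

end
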